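(* Fix $n\ge 1$ and a coalition size $s\in\{1,\ldots,n\}$. Let the periodic canonical increment arrays of size $s$ be listed in some fixed order as $\underline{t}_1,\ldots,\underline{t}_K$ (where $K=|\mathcal{P}(n,s)|$), let $d_j=n\,\pi(\underline{t}_j)/s$, and let $h_1=0$, $h_j=\sum_{i=1}^{j-1}d_i$. Say agent $x\in\{1,\ldots,n\}$ is designated for $\underline{t}_j$ iff $(x-1-h_j)\bmod n<d_j$ (with $\bmod$ taking values in $\{0,\ldots,n-1\}$). Define the allocation of agent $x$ at size $s$ as \[CV_x^s=\{C(x,\underline{t}):\underline{t}\in\mathcal{A}(n,s)\}\cup\{C(x,\underline{t}_j):1\le j\le K,\ x\text{ designated for }\underline{t}_j\}.\] Then for every agent $x\in\{1,\ldots,n\}$, \[\left\lfloor\frac{\binom{n}{s}}{n}\right\rfloor\le|CV_x^s|\le\left\lceil\frac{\binom{n}{s}}{n}\right\rceil,\] so the allocations of any two agents at size $s$ differ by at most one.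
   Context: Agent identifiers are $\{1,\ldots,n\}$, arithmetic on identifiers is modulo $n$ with representatives in $\{1,\ldots,n\}$ (a value $0$ is replaced by $n$). An increment array (IA) of size $s$ for $n$ agents is a tuple $\underline{t}=\langle t_0,\ldots,t_{s-1}\rangle$ of non-negative integers with $\sum t_i=n-s$. Cumulative increments: $\varphi_1=0$, $\varphi_i=\sum_{k=0}^{i-2}(t_k+1)$ for $2\le i\le s+1$. The coalition generated from $x$ is $C(x,\underline{t})=\{x\}\cup\bigcup_{i=2}^{s}\{(x+\varphi_i)\bmod n\}$ (residues in $\{1,\ldots,n\}$). Two IAs of the same size are equivalent ($\approx$) if one is a circular shift of the other; the canonical representative of an equivalence class is its lexicographically smallest member. $\mathcal{E}(n,s)$ is the set of canonical representatives of IAs of size $s$. The period $\pi(\underline{t})$ is the least $p\in\{1,\ldots,s\}$ such that $\underline{t}$ consists of $s/p$ identical consecutive copies of its first $p$ entries. $\mathcal{A}(n,s)=\{\underline{t}\in\mathcal{E}(n,s):\pi(\underline{t})=s\}$ (aperiodic) and $\mathcal{P}(n,s)=\{\underline{t}\in\mathcal{E}(n,s):\pi(\underline{t})<s\}$ (periodic). *)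

theory Defs
  imports Complex_Main
begin

text \<open>Increment arrays are lists of naturals; agents are 1..n.\<close>

definition is_IA :: "nat \<Rightarrow> nat \<Rightarrow> nat list \<Rightarrow> bool" where
  "is_IA n s t \<longleftrightarrow> length t = s \<and> sum_list t = n - s"

definition lex_le :: "nat list \<Rightarrow> nat list \<Rightarrow> bool" where
  "lex_le u v \<longleftrightarrow> u = v \<or> (u, v) \<in> lexord {(a, b). a < b}"

definition ia_equiv :: "nat list \<Rightarrow> nat list \<Rightarrow> bool" where
  "ia_equiv u v \<longleftrightarrow> (\<exists>k. v = rotate k u)"

definition E_set :: "nat \<Rightarrow> nat \<Rightarrow> nat list set" where
  "E_set n s = {t. is_IA n s t \<and> (\<forall>u. is_IA n s u \<and> ia_equiv t u \<longrightarrow> lex_le t u)}"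

definition period :: "nat list \<Rightarrow> nat" where
  "period t = (LEAST p. 1 \<le> p \<and> p \<le> length t \<and> p dvd length t \<and>
                 t = concat (replicate (length t div p) (take p t)))"

definition A_set :: "nat \<Rightarrow> nat \<Rightarrow> nat list set" where
  "A_set n s = {t \<in> E_set n s. period t = s}"

definition P_set :: "nat \<Rightarrow> nat \<Rightarrow> nat list set" where
  "P_set n s = {t \<in> E_set n s. period t < s}"

text \<open>Cumulative increments phi_i (i >= 1), phi_1 = 0.\<close>
definition phi :: "nat list \<Rightarrow> nat \<Rightarrow> nat" where
  "phi t i = (\<Sum>k<i - 1. t ! k + 1)"

definition modrep :: "nat \<Rightarrow> nat \<Rightarrow> nat" where
  "modrep n a = (if a mod n = 0 then n else a mod n)"

definition coalition :: "nat \<Rightarrow> nat \<Rightarrow> nat list \<Rightarrow> nat set" where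
  "coalition n x t = {x} \<union> (\<lambda>i. modrep n (x + phi t i)) ` {2..length t}"

text \<open>d_j and h_j for an enumeration ts (0-indexed) of the periodic arrays.\<close>
definition dval :: "nat \<Rightarrow> nat \<Rightarrow> nat list \<Rightarrow> nat" where
  "dval n s t = n * period t div s"

definition hval :: "nat \<Rightarrow> nat \<Rightarrow> nat list list \<Rightarrow> nat \<Rightarrow> nat" where
  "hval n s ts j = (\<Sum>i<j. dval n s (ts ! i))"

definition designated :: "nat \<Rightarrow> nat \<Rightarrow> nat list list \<Rightarrow> nat \<Rightarrow> nat \<Rightarrow> bool" where
  "designated n s ts j x \<longleftrightarrow>
     (int x - 1 - int (hval n s ts j)) mod int n < int (dval n s (ts ! j))"

definition CV :: "nat \<Rightarrow> nat \<Rightarrow> nat list list \<Rightarrow> nat \<Rightarrow> nat set set" where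
  "CV n s ts x = {coalition n x t | t. t \<in> A_set n s}
      \<union> {coalition n x (ts ! j) | j. j < length ts \<and> designated n s ts j x}"

end

(* Every increment array is a rotation of exactly one canonical representative t, whose rotation
   class has pi(t) elements. Since the increment arrays of size s are the compositions of n - s into
   s parts, the periods of the canonical arrays sum to C(n-1, s-1), i.e. their values
   d(t) = n pi(t) / s sum to C(n, s). Aperiodic arrays have d = n, so C(n, s) = n |A| + D with
   D = d_1 + ... + d_K.
   As t -> C(x, t) is injective, |CV_x| = |A| + #{j. x designated for t_j}. The designation windows
   [h_j, h_j + d_j) tile [0, D) and have length at most n, so x is designated once for every k < D
   with k = x - 1 (mod n), that is D div n + [x - 1 < D mod n] times. Hence
   |CV_x| = C(n, s) div n + [x - 1 < C(n, s) mod n], which lies between the floor and the ceiling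
   of C(n, s) / n. *)

theory Submission
  imports Defs "HOL-Library.List_Lexorder" "HOL-Number_Theory.Cong"
begin

section \<open>Periods of lists\<close>

lemma rotate_concat_replicate:
  "rotate (length xs) (concat (replicate k xs)) = concat (replicate k xs)"
proof (cases k)
  case (Suc k')
  have "concat (replicate k' xs) @ xs = xs @ concat (replicate k' xs)"
    by (induction k') auto
  then show ?thesis using Suc by (simp add: rotate_append)
qed simp

lemma append_commute_imp_concat_replicate:
  assumes "xs @ ys = ys @ xs" "xs \<noteq> []" "length xs dvd length ys"
  shows "ys = concat (replicate (length ys div length xs) xs)"
  using assms
proof (induction "length ys" arbitrary: ys rule: less_induct)
  case less
  show ?case
  proof (cases "ys = []")
    case False
    then have "length xs \<le> length ys"
      using less.prems(3) by (simp add: dvd_imp_le)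
    then have "take (length xs) ys = xs"
      using arg_cong[OF less.prems(1), of "take (length xs)"] by simp
    then obtain ys' where ys: "ys = xs @ ys'"
      by (metis append_take_drop_id)
    have "xs @ ys' = ys' @ xs" "length xs dvd length ys'"
      using less.prems ys by (simp_all add: dvd_diff_nat)
    then have "ys' = concat (replicate (length ys' div length xs) xs)"
      using less.hyps[of ys'] less.prems(2) ys by simp
    moreover have "length ys div length xs = Suc (length ys' div length xs)"
      using ys less.prems(2) by simp
    ultimately show ?thesis using ys by simp
  qed simp
qed

definition is_period :: "'a list \<Rightarrow> nat \<Rightarrow> bool" where
  "is_period t p \<longleftrightarrow> 1 \<le> p \<and> p \<le> length t \<and> p dvd length t \<and>
     t = concat (replicate (length t div p) (take p t))"

lemma is_period_iff_rotate:
  assumes "t \<noteq> []"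
  shows "is_period t p \<longleftrightarrow> 0 < p \<and> p dvd length t \<and> rotate p t = t"
proof
  assume p: "is_period t p"
  then have "length (take p t) = p" unfolding is_period_def by simp
  then show "0 < p \<and> p dvd length t \<and> rotate p t = t"
    using p rotate_concat_replicate[of "take p t" "length t div p"]
    unfolding is_period_def by auto
next
  assume p: "0 < p \<and> p dvd length t \<and> rotate p t = t"
  then have "p \<le> length t" using assms by (simp add: dvd_imp_le)
  show "is_period t p"
  proof (cases "p = length t")
    case False
    then have "p < length t" using \<open>p \<le> length t\<close> by simp
    then have "take p t @ drop p t = drop p t @ take p t"
      using p by (metis append_take_drop_id rotate_drop_take mod_less)
    moreover have "take p t \<noteq> []"
      using assms p by simp
    moreover have "length (take p t) dvd length (drop p t)"
      using p \<open>p < length t\<close> by (simp add: min_def dvd_diff_nat)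
    ultimately have "drop p t = concat (replicate (length (drop p t) div length (take p t)) (take p t))"
      by (rule append_commute_imp_concat_replicate)
    then have "drop p t = concat (replicate ((length t - p) div p) (take p t))"
      using \<open>p < length t\<close> by simp
    moreover have "length t div p = Suc ((length t - p) div p)"
      using p \<open>p < length t\<close> by (simp add: le_div_geq)
    ultimately have "t = concat (replicate (length t div p) (take p t))"
      using append_take_drop_id[of p t] by simp
    then show ?thesis using p \<open>p \<le> length t\<close> unfolding is_period_def by simp
  qed (use p in \<open>simp add: is_period_def Suc_le_eq\<close>)
qed

lemma period_eq_Least_is_period: "period t = (LEAST p. is_period t p)"
  unfolding period_def is_period_def ..

lemma is_period_period:
  assumes "t \<noteq> []"
  shows "is_period t (period t)"
proof -
  have "is_period t (length t)"
    using assms by (simp add: is_period_iff_rotate)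
  then show ?thesis
    unfolding period_eq_Least_is_period by (rule LeastI)
qed

lemma period_le_is_period: "is_period t p \<Longrightarrow> period t \<le> p"
  unfolding period_eq_Least_is_period by (rule Least_le)

lemma
  assumes "t \<noteq> []"
  shows period_pos: "0 < period t"
    and period_dvd_length: "period t dvd length t"
    and rotate_period: "rotate (period t) t = t"
  using is_period_period[OF assms] unfolding is_period_iff_rotate[OF assms] by auto

lemma period_le_length: "t \<noteq> [] \<Longrightarrow> period t \<le> length t"
  using period_dvd_length by (simp add: dvd_imp_le)

lemma rotate_mult_fixed: "rotate k t = t \<Longrightarrow> rotate (k * c) t = t"
proof (induction c)
  case (Suc c)
  have "rotate (k * Suc c) t = rotate (k * c) (rotate k t)"
    by (simp add: rotate_rotate add.commute)
  then show ?case using Suc by simp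
qed simp

lemma rotate_gcd_fixed:
  assumes "rotate a t = t" "rotate b t = t"
  shows "rotate (gcd a b) t = t"
proof (cases "a = 0")
  case False
  then obtain u v where uv: "a * u = b * v + gcd a b"
    using bezout_nat by blast
  have "rotate (gcd a b) t = rotate (gcd a b) (rotate (b * v) t)"
    using rotate_mult_fixed[OF assms(2)] by simp
  also have "\<dots> = rotate (a * u) t"
    by (simp add: rotate_rotate uv add.commute)
  finally show ?thesis using rotate_mult_fixed[OF assms(1)] by simp
qed (use assms in simp)

lemma rotate_fixed_iff_period_dvd:
  assumes "t \<noteq> []"
  shows "rotate k t = t \<longleftrightarrow> period t dvd k"
proof
  assume k: "rotate k t = t"
  let ?g = "gcd k (period t)"
  have "rotate ?g t = t"
    using rotate_gcd_fixed[OF k rotate_period[OF assms]] .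
  moreover have "0 < ?g" "?g dvd length t"
    using period_pos[OF assms] period_dvd_length[OF assms] dvd_trans by auto
  ultimately have "period t \<le> ?g"
    using assms by (simp add: period_le_is_period is_period_iff_rotate)
  then have "?g = period t"
    using period_pos[OF assms] by (simp add: dvd_imp_le le_antisym)
  then show "period t dvd k" by (metis gcd_dvd1)
next
  assume "period t dvd k"
  then show "rotate k t = t"
    using rotate_mult_fixed[OF rotate_period[OF assms]] by (auto elim: dvdE)
qed

lemma inj_rotate: "inj (rotate k)"
  unfolding rotate_def by (rule inj_fn[OF inj_rotate1])

lemma rotate_eq_rotate_iff:
  assumes "t \<noteq> []"
  shows "rotate i t = rotate j t \<longleftrightarrow> i mod period t = j mod period t"
proof -
  have *: "rotate i t = rotate j t \<longleftrightarrow> j mod period t = i mod period t" if "i \<le> j" for i j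
  proof -
    have "rotate i t = rotate j t \<longleftrightarrow> rotate i t = rotate i (rotate (j - i) t)"
      using that by (simp add: rotate_rotate)
    also have "\<dots> \<longleftrightarrow> t = rotate (j - i) t"
      by (rule inj_eq[OF inj_rotate])
    also have "\<dots> \<longleftrightarrow> rotate (j - i) t = t"
      by (rule eq_commute)
    also have "\<dots> \<longleftrightarrow> period t dvd j - i"
      by (rule rotate_fixed_iff_period_dvd[OF assms])
    also have "\<dots> \<longleftrightarrow> j mod period t = i mod period t"
      by (rule mod_eq_dvd_iff_nat[OF that, symmetric])
    finally show ?thesis .
  qed
  show ?thesis
    using *[of i j] *[of j i] nat_le_linear[of i j] by argo
qed

section \<open>Rotation classes and their least elements\<close>

definition rotations :: "'a list \<Rightarrow> 'a list set" where
  "rotations t = range (\<lambda>k. rotate k t)"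

lemma self_in_rotations: "t \<in> rotations t"
  unfolding rotations_def by (metis rangeI rotate0 id_apply)

lemma rotations_conv_period:
  assumes "t \<noteq> []"
  shows "rotations t = (\<lambda>k. rotate k t) ` {..<period t}"
proof -
  have "rotate k t = rotate (k mod period t) t" for k
    using assms by (simp add: rotate_eq_rotate_iff)
  then show ?thesis
    unfolding rotations_def using period_pos[OF assms] by fastforce
qed

lemma finite_rotations: "t \<noteq> [] \<Longrightarrow> finite (rotations (t :: nat list))"
  by (simp add: rotations_conv_period)

lemma card_rotations:
  assumes "t \<noteq> []"
  shows "card (rotations t) = period t"
proof -
  have "inj_on (\<lambda>k. rotate k t) {..<period t}"
    using assms by (auto intro: inj_onI simp: rotate_eq_rotate_iff)
  then show ?thesis
    by (simp add: rotations_conv_period[OF assms] card_image)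
qed

lemma rotations_rotate: "rotations (rotate k t) = rotations t"
proof (cases "t = []")
  case False
  have "rotate j t \<in> rotations (rotate k t)" for j
  proof -
    let ?L = "length t"
    have "k \<le> ?L * k"
      using False by (cases t) auto
    then have "j + ?L * k - k + k = j + ?L * k"
      by linarith
    then have "(j + ?L * k - k + k) mod ?L = j mod ?L"
      by simp
    then have "rotate (j + ?L * k - k) (rotate k t) = rotate j t"
      by (metis rotate_rotate rotate_conv_mod)
    then show ?thesis
      unfolding rotations_def by (metis rangeI)
  qed
  then show ?thesis
    unfolding rotations_def by (auto simp: rotate_rotate)
qed simp

lemma rotations_eq_of_mem:
  assumes "u \<in> rotations t"
  shows "rotations u = rotations t"
proof -
  obtain k where "u = rotate k t"
    using assms unfolding rotations_def by blast
  then show ?thesis by (simp add: rotations_rotate)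
qed

definition least_rotation :: "'a::linorder list \<Rightarrow> bool" where
  "least_rotation t \<longleftrightarrow> (\<forall>u\<in>rotations t. t \<le> u)"

lemma card_eq_sum_period_least_rotation:
  fixes S :: "nat list set"
  assumes "finite S" and closed: "\<And>t k. t \<in> S \<Longrightarrow> rotate k t \<in> S" and "[] \<notin> S"
  shows "card S = (\<Sum>t\<in>{t\<in>S. least_rotation t}. period t)"
proof -
  let ?R = "{t\<in>S. least_rotation t}"
  have S_eq: "S = (\<Union>t\<in>?R. rotations t)"
  proof
    show "(\<Union>t\<in>?R. rotations t) \<subseteq> S"
      using closed unfolding rotations_def by auto
  next
    show "S \<subseteq> (\<Union>t\<in>?R. rotations t)"
    proof
      fix u assume "u \<in> S"
      define c where "c = Min (rotations u)"
      have fin: "finite (rotations u)"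
        using \<open>u \<in> S\<close> assms(3) finite_rotations by metis
      then have "c \<in> rotations u"
        unfolding c_def using self_in_rotations by (metis Min_in empty_iff)
      then have rc: "rotations c = rotations u"
        by (rule rotations_eq_of_mem)
      have "c \<in> S"
        using closed \<open>u \<in> S\<close> \<open>c \<in> rotations u\<close> unfolding rotations_def by auto
      moreover have "\<forall>v\<in>rotations u. c \<le> v"
        unfolding c_def using fin by simp
      then have "least_rotation c"
        unfolding least_rotation_def rc .
      moreover have "u \<in> rotations c"
        using rc self_in_rotations by blast
      ultimately show "u \<in> (\<Union>t\<in>?R. rotations t)" by blast
    qed
  qed
  have disjoint: "rotations a \<inter> rotations b = {}" if "a \<in> ?R" "b \<in> ?R" "a \<noteq> b" for a b
  proof (rule ccontr)
    assume "rotations a \<inter> rotations b \<noteq> {}"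
    then have "rotations a = rotations b"
      using rotations_eq_of_mem by blast
    then have "a \<le> b" "b \<le> a"
      using that(1,2) self_in_rotations unfolding least_rotation_def by blast+
    then show False using that(3) by simp
  qed
  have "card S = (\<Sum>t\<in>?R. card (rotations t))"
    using assms(1,3) S_eq disjoint
    by (subst S_eq, intro card_UN_disjoint) (auto intro: finite_rotations)
  also have "\<dots> = (\<Sum>t\<in>?R. period t)"
    using assms(3) by (intro sum.cong refl) (metis (mono_tags, lifting) card_rotations mem_Collect_eq)
  finally show ?thesis .
qed

section \<open>Counting increment arrays\<close>

definition IA_set :: "nat \<Rightarrow> nat \<Rightarrow> nat list set" where
  "IA_set n s = {t. is_IA n s t}"

lemma sum_list_rotate: "sum_list (rotate k xs) = sum_list (xs :: 'a::comm_monoid_add list)"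
  by (metis rotate_drop_take append_take_drop_id sum_list_append add.commute)

lemma is_IA_rotate: "is_IA n s t \<Longrightarrow> is_IA n s (rotate k t)"
  unfolding is_IA_def by (simp add: sum_list_rotate)

lemma finite_IA_set: "finite (IA_set n s)"
proof (rule finite_subset)
  show "IA_set n s \<subseteq> {t. set t \<subseteq> {..n} \<and> length t = s}"
    unfolding IA_set_def is_IA_def using member_le_sum_list by fastforce
qed (simp add: finite_lists_length_eq)

lemma card_IA_set:
  assumes "1 \<le> s" "s \<le> n"
  shows "card (IA_set n s) = (n - 1) choose (s - 1)"
proof -
  have "card (IA_set n s) = (n - s + s - 1) choose (n - s)"
    unfolding IA_set_def is_IA_def by (rule card_length_sum_list)
  also have "\<dots> = (n - 1) choose (n - 1 - (s - 1))"
    using assms by simp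
  also have "\<dots> = (n - 1) choose (s - 1)"
    by (rule binomial_symmetric[symmetric]) (use assms in simp)
  finally show ?thesis .
qed

lemma lex_le_iff_le: "lex_le u v \<longleftrightarrow> u \<le> v"
  unfolding lex_le_def list_le_def list_less_def by auto

lemma E_set_eq: "E_set n s = {t \<in> IA_set n s. least_rotation t}"
  unfolding E_set_def IA_set_def least_rotation_def rotations_def ia_equiv_def lex_le_iff_le
  using is_IA_rotate by blast

lemma sum_period_E_set:
  assumes "1 \<le> s" "s \<le> n"
  shows "(\<Sum>t\<in>E_set n s. period t) = (n - 1) choose (s - 1)"
proof -
  have "[] \<notin> IA_set n s"
    using assms(1) unfolding IA_set_def is_IA_def by auto
  then show ?thesis
    unfolding E_set_eq card_IA_set[OF assms, symmetric]
    by (intro card_eq_sum_period_least_rotation[symmetric] finite_IA_set)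
      (auto simp: IA_set_def is_IA_rotate)
qed

lemma sum_list_concat_replicate: "sum_list (concat (replicate k xs)) = k * sum_list xs"
  by (induction k) auto

lemma dval_mult_eq:
  assumes "is_IA n s t" "1 \<le> s" "s \<le> n"
  shows "dval n s t * s = n * period t"
proof -
  let ?p = "period t" and ?b = "take (period t) t"
  have "length t = s" "t \<noteq> []"
    using assms unfolding is_IA_def by auto
  then obtain q where t: "t = concat (replicate q ?b)" and s: "s = q * ?p"
    using is_period_period[of t] unfolding is_period_def by (auto elim!: dvdE)
  have "n - s = q * sum_list ?b"
    using assms(1) t sum_list_concat_replicate unfolding is_IA_def by metis
  then have "n = s + q * sum_list ?b"
    using assms(3) by simp
  then have "n * ?p = s * (?p + sum_list ?b)"
    by (simp add: s algebra_simps)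
  then show ?thesis
    unfolding dval_def using assms(2) by simp
qed

lemma sum_dval_E_set:
  assumes "1 \<le> s" "s \<le> n"
  shows "(\<Sum>t\<in>E_set n s. dval n s t) = n choose s"
proof -
  have "(\<Sum>t\<in>E_set n s. dval n s t) * s = (\<Sum>t\<in>E_set n s. n * period t)"
    unfolding sum_distrib_right
    using assms by (intro sum.cong) (auto simp: E_set_eq IA_set_def dval_mult_eq)
  also have "\<dots> = n * ((n - 1) choose (s - 1))"
    by (simp add: sum_distrib_left[symmetric] sum_period_E_set[OF assms])
  also have "\<dots> = (n choose s) * s"
    using times_binomial_minus1_eq[of s n] assms by (metis mult.commute not_one_le_zero not_gr0)
  finally show ?thesis
    using assms(1) by simp
qed

section \<open>A coalition determines its increment array\<close>

lemma phi_Suc: "phi t (Suc i) = (\<Sum>k<i. t ! k + 1)"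
  unfolding phi_def by simp

lemma strict_mono_phi_Suc: "strict_mono (\<lambda>i. phi t (Suc i))"
  unfolding strict_mono_Suc_iff phi_Suc by simp

lemma phi_Suc_length: "phi t (Suc (length t)) = sum_list t + length t"
  unfolding phi_Suc sum.distrib by (simp add: sum_list_sum_nth atLeast0LessThan)

lemma nth_eq_phi_diff: "t ! k = phi t (Suc (Suc k)) - phi t (Suc k) - 1"
  by (simp add: phi_Suc)

lemma phi_image_inj:
  assumes len: "length t = length t'" and sum: "sum_list t = sum_list t'"
    and img: "(\<lambda>i. phi t (Suc i)) ` {..<length t} = (\<lambda>i. phi t' (Suc i)) ` {..<length t'}"
  shows "t = t'"
proof -
  let ?L = "length t"
  have sorted: "sorted_wrt (<) (map (\<lambda>i. phi u (Suc i)) [0..<?L])" for u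
    unfolding sorted_wrt_map
    by (rule sorted_wrt_mono_rel[OF _ sorted_wrt_upt])
      (use strict_mono_phi_Suc[of u] in \<open>auto simp: strict_mono_def\<close>)
  have "map (\<lambda>i. phi t (Suc i)) [0..<?L] = map (\<lambda>i. phi t' (Suc i)) [0..<?L]"
    using sorted[of t] sorted[of t'] img len
    by (intro sorted_distinct_set_unique) (auto simp: strict_sorted_iff atLeast0LessThan)
  then have "phi t (Suc i) = phi t' (Suc i)" if "i \<le> ?L" for i
    using that len sum phi_Suc_length[of t] phi_Suc_length[of t']
    by (cases "i = ?L") (auto dest: map_eq_conv[THEN iffD1])
  then show ?thesis
    using len by (intro nth_equalityI) (auto simp: nth_eq_phi_diff[of t] nth_eq_phi_diff[of t'])
qed

lemma phi_Suc_less: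
  assumes "is_IA n s t" "i < s" "s \<le> n"
  shows "phi t (Suc i) < n"
proof -
  have "phi t (Suc i) < phi t (Suc s)"
    using strict_mono_phi_Suc assms(2) by (rule strict_monoD)
  also have "\<dots> = n"
    using assms(1,3) phi_Suc_length[of t] unfolding is_IA_def by simp
  finally show ?thesis .
qed

lemma coalition_eq_image:
  assumes "x \<in> {1..n}" "t \<noteq> []"
  shows "coalition n x t = (\<lambda>d. modrep n (x + d)) ` (\<lambda>i. phi t (Suc i)) ` {..<length t}"
proof -
  have "Suc ` {..<length t} = insert 1 {2..length t}"
    using assms(2) by (auto simp: image_Suc_lessThan Suc_le_eq)
  moreover have "modrep n (x + phi t 1) = x"
    using assms(1) unfolding modrep_def phi_def by (cases "x = n") auto
  ultimately have "coalition n x t = (\<lambda>i. modrep n (x + phi t i)) ` Suc ` {..<length t}"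
    unfolding coalition_def by simp
  then show ?thesis
    by (simp add: image_image)
qed

lemma inj_on_modrep_add: "inj_on (\<lambda>d. modrep n (x + d)) {..<n}"
proof (rule inj_onI)
  fix d e assume "d \<in> {..<n}" "e \<in> {..<n}" "modrep n (x + d) = modrep n (x + e)"
  moreover have "modrep n a mod n = a mod n" for a
    unfolding modrep_def by simp
  ultimately have "[x + d = x + e] (mod n)"
    unfolding cong_def by metis
  then show "d = e"
    using \<open>d \<in> {..<n}\<close> \<open>e \<in> {..<n}\<close> by (auto simp: cong_add_lcancel_nat cong_less_modulus_unique_nat)
qed

lemma inj_on_coalition:
  assumes "1 \<le> s" "s \<le> n" "x \<in> {1..n}"
  shows "inj_on (coalition n x) (IA_set n s)"
proof (rule inj_onI)
  fix t t' assume t: "t \<in> IA_set n s" and t': "t' \<in> IA_set n s"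
    and eq: "coalition n x t = coalition n x t'"
  have IA: "is_IA n s t" "is_IA n s t'" and len: "length t = s" "length t' = s"
    using t t' unfolding IA_set_def is_IA_def by auto
  have ne: "t \<noteq> []" "t' \<noteq> []"
    using len assms(1) by auto
  have sub: "(\<lambda>i. phi u (Suc i)) ` {..<s} \<subseteq> {..<n}" if "is_IA n s u" for u
    using phi_Suc_less[OF that _ assms(2)] by auto
  have "(\<lambda>d. modrep n (x + d)) ` (\<lambda>i. phi t (Suc i)) ` {..<s} =
      (\<lambda>d. modrep n (x + d)) ` (\<lambda>i. phi t' (Suc i)) ` {..<s}"
    using eq len coalition_eq_image[OF assms(3) ne(1)] coalition_eq_image[OF assms(3) ne(2)] by simp
  then have "(\<lambda>i. phi t (Suc i)) ` {..<s} = (\<lambda>i. phi t' (Suc i)) ` {..<s}"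
    using inj_on_image_eq_iff[OF inj_on_modrep_add sub[OF IA(1)] sub[OF IA(2)]] by simp
  then show "t = t'"
    using IA len unfolding is_IA_def by (intro phi_image_inj) auto
qed

section \<open>Residues in consecutive windows\<close>

lemma mod_eq_in_window_iff:
  fixes a k n y :: nat
  assumes "y < n" "a \<le> k" "k < a + n"
  shows "k mod n = y \<longleftrightarrow> int k - int a = (int y - int a) mod int n"
proof -
  have "k mod n = y \<longleftrightarrow> int k mod int n = int y mod int n"
    using assms(1) by (metis mod_less of_nat_eq_iff of_nat_mod)
  also have "\<dots> \<longleftrightarrow> (int k - int a) mod int n = (int y - int a) mod int n"
    by (simp add: mod_eq_dvd_iff)
  also have "(int k - int a) mod int n = int k - int a"
    using assms(2,3) by simp
  finally show ?thesis .
qed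

lemma card_window_mod_eq:
  fixes a d n y :: nat
  assumes "y < n" "d \<le> n"
  shows "card {k. a \<le> k \<and> k < a + d \<and> k mod n = y} = of_bool ((int y - int a) mod int n < int d)"
proof -
  define r where "r = nat ((int y - int a) mod int n)"
  have r: "int r = (int y - int a) mod int n"
    using assms(1) by (simp add: r_def)
  have "a \<le> k \<and> k < a + d \<and> k mod n = y \<longleftrightarrow> r < d \<and> k = a + r" for k
  proof
    assume k: "a \<le> k \<and> k < a + d \<and> k mod n = y"
    then have "int k - int a = int r"
      using mod_eq_in_window_iff[OF assms(1), of a k] r assms(2) by simp
    then show "r < d \<and> k = a + r"
      using k by linarith
  next
    assume k: "r < d \<and> k = a + r"
    then show "a \<le> k \<and> k < a + d \<and> k mod n = y"
      using mod_eq_in_window_iff[OF assms(1), of a k] r assms(2) by simp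
  qed
  then have "{k. a \<le> k \<and> k < a + d \<and> k mod n = y} = (if r < d then {a + r} else {})"
    by auto
  then show ?thesis
    by (simp add: r[symmetric])
qed

lemma card_less_mod_eq:
  fixes D n y :: nat
  assumes "y < n"
  shows "card {k. k < D \<and> k mod n = y} = D div n + of_bool (y < D mod n)"
proof (induction D)
  case (Suc D)
  have "{k. k < Suc D \<and> k mod n = y} =
      {k. k < D \<and> k mod n = y} \<union> (if D mod n = y then {D} else {})"
    by (auto simp: less_Suc_eq)
  then have "card {k. k < Suc D \<and> k mod n = y} = card {k. k < D \<and> k mod n = y} + of_bool (D mod n = y)"
    by simp
  then show ?case
    using Suc.IH assms by (auto simp: mod_Suc div_Suc)
qed simp

text \<open>The windows [H j, H j + d j) with H j = d 0 + ... + d (j - 1) tile [0, H K), and a window of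
  length at most n contains a k with k mod n = y exactly when (y - H j) mod n < d j.\<close>

lemma card_windows_mod_eq:
  fixes d :: "nat \<Rightarrow> nat" and K n y :: nat
  assumes "y < n" "\<forall>i<K. d i \<le> n"
  shows "card {j. j < K \<and> (int y - int (\<Sum>i<j. d i)) mod int n < int (d j)} =
         card {k. k < (\<Sum>i<K. d i) \<and> k mod n = y}"
  using assms(2)
proof (induction K)
  case (Suc K)
  let ?P = "\<lambda>j. (int y - int (\<Sum>i<j. d i)) mod int n < int (d j)"
  let ?H = "\<Sum>i<K. d i"
  have "{j. j < Suc K \<and> ?P j} = {j. j < K \<and> ?P j} \<union> (if ?P K then {K} else {})"
    by (auto simp: less_Suc_eq)
  then have "card {j. j < Suc K \<and> ?P j} = card {j. j < K \<and> ?P j} + of_bool (?P K)"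
    by simp
  moreover have "card {k. k < ?H + d K \<and> k mod n = y} =
      card ({k. k < ?H \<and> k mod n = y} \<union> {k. ?H \<le> k \<and> k < ?H + d K \<and> k mod n = y})"
    by (rule arg_cong[where f = card]) auto
  moreover have "\<dots> = card {k. k < ?H \<and> k mod n = y} + card {k. ?H \<le> k \<and> k < ?H + d K \<and> k mod n = y}"
    by (rule card_Un_disjoint) auto
  moreover have "card {k. ?H \<le> k \<and> k < ?H + d K \<and> k mod n = y} = of_bool (?P K)"
    using card_window_mod_eq[OF assms(1)] Suc.prems by simp
  moreover have "card {j. j < K \<and> ?P j} = card {k. k < ?H \<and> k mod n = y}"
    using Suc by simp
  ultimately show ?case
    unfolding sum.lessThan_Suc by linarith
qed simp

section \<open>Size of the allocations\<close>

lemma period_le_of_E_set: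
  assumes "t \<in> E_set n s" "1 \<le> s"
  shows "period t \<le> s"
proof -
  have "length t = s" "t \<noteq> []"
    using assms unfolding E_set_def is_IA_def by auto
  then show ?thesis
    using period_le_length by metis
qed

lemma dval_le:
  assumes "t \<in> E_set n s" "1 \<le> s"
  shows "dval n s t \<le> n"
proof -
  have "n * period t div s \<le> n * s div s"
    using period_le_of_E_set[OF assms] by (intro div_le_mono) simp
  then show ?thesis
    unfolding dval_def using assms(2) by simp
qed

lemma E_set_eq_A_set_Un_P_set:
  assumes "1 \<le> s"
  shows "E_set n s = A_set n s \<union> P_set n s"
  using period_le_of_E_set[OF _ assms] unfolding A_set_def P_set_def by force

lemma card_A_set_sum_dval_P_set:
  assumes "1 \<le> s" "s \<le> n" "distinct ts" "set ts = P_set n s"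
  shows "n * card (A_set n s) + (\<Sum>t\<leftarrow>ts. dval n s t) = n choose s"
proof -
  have "finite (E_set n s)"
    unfolding E_set_eq using finite_IA_set by simp
  then have fin: "finite (A_set n s)" "finite (P_set n s)"
    unfolding E_set_eq_A_set_Un_P_set[OF assms(1)] by simp_all
  have "n choose s = (\<Sum>t\<in>A_set n s \<union> P_set n s. dval n s t)"
    using sum_dval_E_set[OF assms(1,2)] E_set_eq_A_set_Un_P_set[OF assms(1)] by simp
  also have "\<dots> = (\<Sum>t\<in>A_set n s. dval n s t) + (\<Sum>t\<in>P_set n s. dval n s t)"
    using fin by (intro sum.union_disjoint) (auto simp: A_set_def P_set_def)
  also have "(\<Sum>t\<in>A_set n s. dval n s t) = n * card (A_set n s)"
    using assms(1) by (simp add: A_set_def dval_def)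
  also have "(\<Sum>t\<in>P_set n s. dval n s t) = (\<Sum>t\<leftarrow>ts. dval n s t)"
    using sum_list_distinct_conv_sum_set[OF assms(3), of "dval n s"] assms(4) by simp
  finally show ?thesis ..
qed

lemma card_CV:
  assumes "1 \<le> s" "s \<le> n" "distinct ts" "set ts = P_set n s" "x \<in> {1..n}"
  shows "card (CV n s ts x) = card (A_set n s) + card {j. j < length ts \<and> designated n s ts j x}"
proof -
  let ?J = "{j. j < length ts \<and> designated n s ts j x}"
  have sub: "A_set n s \<subseteq> IA_set n s" "P_set n s \<subseteq> IA_set n s"
    unfolding A_set_def P_set_def E_set_eq by auto
  have P: "(!) ts ` ?J \<subseteq> P_set n s"
    using assms(4) by auto
  have inj: "inj_on (coalition n x) (A_set n s \<union> (!) ts ` ?J)"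
    by (rule inj_on_subset[OF inj_on_coalition[OF assms(1,2,5)]]) (use sub P in blast)
  have "CV n s ts x = coalition n x ` (A_set n s \<union> (!) ts ` ?J)"
    unfolding CV_def by blast
  then have "card (CV n s ts x) = card (A_set n s \<union> (!) ts ` ?J)"
    using inj by (simp add: card_image)
  also have "\<dots> = card (A_set n s) + card ((!) ts ` ?J)"
    using P finite_subset[OF sub(1) finite_IA_set]
    by (intro card_Un_disjoint) (auto simp: A_set_def P_set_def)
  also have "card ((!) ts ` ?J) = card ?J"
    using assms(3) by (intro card_image inj_on_nth) auto
  finally show ?thesis .
qed

lemma card_designated:
  assumes "1 \<le> s" "set ts = P_set n s" "x \<in> {1..n}"
  shows "card {j. j < length ts \<and> designated n s ts j x} =
         (\<Sum>t\<leftarrow>ts. dval n s t) div n + of_bool (x - 1 < (\<Sum>t\<leftarrow>ts. dval n s t) mod n)"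
proof -
  let ?d = "\<lambda>i. dval n s (ts ! i)" and ?y = "x - 1"
  have "\<forall>i<length ts. ?d i \<le> n"
    using assms(1,2) dval_le E_set_eq_A_set_Un_P_set nth_mem by blast
  moreover have "?y < n"
    using assms(3) by auto
  moreover have "{j. j < length ts \<and> designated n s ts j x} =
      {j. j < length ts \<and> (int ?y - int (\<Sum>i<j. ?d i)) mod int n < int (?d j)}"
    using assms(3) unfolding designated_def hval_def by (simp add: of_nat_diff)
  moreover have "(\<Sum>t\<leftarrow>ts. dval n s t) = (\<Sum>i<length ts. ?d i)"
    by (simp add: sum_list_sum_nth atLeast0LessThan)
  ultimately show ?thesis
    using card_windows_mod_eq[of ?y n "length ts" ?d] card_less_mod_eq[of ?y n] by presburger
qed

lemma div_add_of_bool_between_floor_ceiling: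
  fixes c n :: nat
  assumes "0 < n" "b \<Longrightarrow> c mod n \<noteq> 0"
  shows "\<lfloor>real c / real n\<rfloor> \<le> int (c div n + of_bool b) \<and>
         int (c div n + of_bool b) \<le> \<lceil>real c / real n\<rceil>"
proof -
  have floor: "\<lfloor>real c / real n\<rfloor> = int (c div n)"
    by (rule floor_divide_of_nat_eq)
  have "\<lceil>real c / real n\<rceil> = int (c div n) + 1" if "c mod n \<noteq> 0"
  proof -
    have "c \<noteq> c div n * n"
      using that div_mult_mod_eq[of c n] by linarith
    then have "real c \<noteq> real (c div n) * real n"
      unfolding of_nat_mult[symmetric] of_nat_eq_iff .
    then have "real c / real n \<noteq> of_int \<lfloor>real c / real n\<rfloor>"
      using assms(1) unfolding floor by (simp add: divide_eq_eq)
    then show ?thesis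
      unfolding ceiling_altdef[of "real c / real n"] floor by simp
  qed
  then show ?thesis
    using floor floor_le_ceiling[of "real c / real n"] assms(2) by (cases b) auto
qed

theorem theorem9:
  fixes n s :: nat and ts :: "nat list list" and x :: nat
  assumes "1 \<le> n" and "1 \<le> s" and "s \<le> n"
    and "distinct ts" and "set ts = P_set n s"
    and "x \<in> {1..n}"
  shows "\<lfloor>real (n choose s) / real n\<rfloor> \<le> int (card (CV n s ts x)) \<and>
         int (card (CV n s ts x)) \<le> \<lceil>real (n choose s) / real n\<rceil>"
proof -
  let ?D = "\<Sum>t\<leftarrow>ts. dval n s t"
  have total: "n choose s = n * card (A_set n s) + ?D"
    using card_A_set_sum_dval_P_set[OF assms(2-5)] by simp
  have "card (CV n s ts x) = card (A_set n s) + ?D div n + of_bool (x - 1 < ?D mod n)"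
    using card_CV[OF assms(2-6)] card_designated[OF assms(2,5,6)] by simp
  also have "\<dots> = (n choose s) div n + of_bool (x - 1 < (n choose s) mod n)"
    unfolding total using assms(1) by simp
  finally show ?thesis
    using div_add_of_bool_between_floor_ceiling[of n] assms(1) by simp
qed

end
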